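(* Let $K$ be a field of characteristic $0$, and let $a(z)=\sum_{i=0}^u a_iz^i$, $b(z)=\sum_{j=0}^v b_jz^j\in K[z]$ with $a_u\ne0$, $b_v\ne0$, $w=\max\{u-2,v-1\}\ge0$, and such that if $u-1=v$ then $a_u(k+u)+b_v\ne0$ for all integers $k\ge0$. Let $L=-a(z)\frac{d}{dz}+b(z)$ and let $f_0,\ldots,f_w\in(1/z)K[[1/z]]$ be linearly independent over $K$ with $L\cdot f_j\in K[z]$ for all $0\le j\le w$. Then \[\bigcap_{j=0}^w\ker\varphi_{f_j}=L^*\cdot K[t].\]
   Context: For $f=\sum_{k\ge0}f_kz^{-k-1}$, $L\cdot f=-af'+bf$ (termwise derivative), and $\varphi_f:K[t]\to K$ is the $K$-linear map with $\varphi_f(t^k)=f_k$. $L^*$ is the adjoint of $L$, acting by $L^*\cdot P(t)=\frac{d}{dt}(a(t)P(t))+b(t)P(t)$, and $L^*\cdot K[t]=\{L^*\cdot P:P\in K[t]\}$. *)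

theory Defs
  imports "HOL-Computational_Algebra.Polynomial"
begin

text \<open>A series f in (1/z)K[[1/z]] is given by its coefficient sequence f :: nat => 'a,
  f = sum_k f k * z^(-k-1). Series with finitely many positive powers of z
  (elements of K((1/z))) are represented by coefficient functions int => 'a,
  g n = coefficient of z^n.\<close>

definition ser_of :: "(nat \<Rightarrow> 'a::zero) \<Rightarrow> int \<Rightarrow> 'a" where
  "ser_of f n = (if n < 0 then f (nat (- n - 1)) else 0)"

definition ser_deriv :: "(int \<Rightarrow> 'a::ring_1) \<Rightarrow> int \<Rightarrow> 'a" where
  "ser_deriv g n = of_int (n + 1) * g (n + 1)"

definition poly_mult_ser :: "'a::comm_ring_1 poly \<Rightarrow> (int \<Rightarrow> 'a) \<Rightarrow> int \<Rightarrow> 'a" where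
  "poly_mult_ser p g n = (\<Sum>i\<le>degree p. coeff p i * g (n - int i))"

definition Lop :: "'a::comm_ring_1 poly \<Rightarrow> 'a poly \<Rightarrow> (nat \<Rightarrow> 'a) \<Rightarrow> int \<Rightarrow> 'a" where
  "Lop a b f n = - poly_mult_ser a (ser_deriv (ser_of f)) n + poly_mult_ser b (ser_of f) n"

definition in_poly_ring :: "(int \<Rightarrow> 'a::zero) \<Rightarrow> bool" where
  "in_poly_ring g \<longleftrightarrow> (\<forall>n<0. g n = 0)"

definition phi :: "(nat \<Rightarrow> 'a::comm_ring_1) \<Rightarrow> 'a poly \<Rightarrow> 'a" where
  "phi f P = (\<Sum>k\<le>degree P. coeff P k * f k)"

definition Ladj :: "'a::idom poly \<Rightarrow> 'a poly \<Rightarrow> 'a poly \<Rightarrow> 'a poly" where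
  "Ladj a b P = pderiv (a * P) + b * P"

end

theory Submission
  imports Defs "Jordan_Normal_Form.Determinant"
begin

text \<open>The functional \<open>\<phi>\<^sub>f\<close> evaluated at \<open>L\<^sup>* t\<^sup>m\<close> is the coefficient of \<open>z\<^sup>-\<^sup>m\<^sup>-\<^sup>1\<close> in \<open>L \<cdot> f\<close>,
  so \<open>L \<cdot> f \<in> K[z]\<close> means that \<open>\<phi>\<^sub>f\<close> vanishes on \<open>L\<^sup>* K[t]\<close>. The hypotheses on the leading
  coefficients say that \<open>L\<^sup>* t\<^sup>m\<close> has degree exactly \<open>m + w + 1\<close>, so by division every
  polynomial is congruent modulo \<open>L\<^sup>* K[t]\<close> to one of degree at most \<open>w\<close>. A linear
  combination of the \<open>\<phi>\<^sub>f\<^sub>j\<close> vanishing on these \<open>w + 1\<close> low powers would then vanish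
  everywhere, so by independence of the \<open>f\<^sub>j\<close> the \<open>w + 1\<close> functionals are independent on the
  \<open>(w + 1)\<close>-dimensional space of polynomials of degree at most \<open>w\<close>, and their only common zero
  there is \<open>0\<close>.\<close>

lemma phi_eq_sum_atMost:
  assumes "degree P \<le> N"
  shows "phi f P = (\<Sum>k\<le>N. coeff P k * f k)"
  unfolding phi_def using assms
  by (intro sum.mono_neutral_left) (auto simp: coeff_eq_0)

lemma phi_add: "phi f (P + Q) = phi f P + phi f Q"
proof -
  let ?N = "max (degree P) (degree Q)"
  have "degree (P + Q) \<le> ?N"
    by (rule degree_add_le) auto
  then show ?thesis
    by (simp add: phi_eq_sum_atMost[of _ ?N] sum.distrib algebra_simps)
qed

lemma phi_diff: "phi f (P - Q) = phi f P - phi f Q"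
  using phi_add[of f "P - Q" Q] by simp

lemma phi_smult: "phi f (Polynomial.smult c P) = c * phi f P"
  using phi_eq_sum_atMost[of "Polynomial.smult c P" "degree P" f] degree_smult_le[of c P]
  by (simp add: phi_def sum_distrib_left mult.assoc)

lemma phi_sum: "phi f (\<Sum>x\<in>S. g x) = (\<Sum>x\<in>S. phi f (g x))"
  by (induction S rule: infinite_finite_induct) (auto simp: phi_add phi_def[of _ 0])

lemma phi_monom: "phi f (monom c n) = c * f n"
  using phi_eq_sum_atMost[of "monom c n" n f] degree_monom_le[of c n]
  by (auto simp: if_distrib[of "\<lambda>x. x * _"] cong: if_cong)

lemma phi_lincomb: "phi (\<lambda>k. \<Sum>j\<in>S. c j * f j k) P = (\<Sum>j\<in>S. c j * phi (f j) P)"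
  unfolding phi_def by (simp add: sum_distrib_left sum.swap[of _ S] algebra_simps)

lemma ser_of_neg: "ser_of f (- int k - 1) = f k"
  by (simp add: ser_of_def)

lemma ser_deriv_ser_of_neg: "ser_deriv (ser_of f) (- int k - 1) = - of_nat k * f (k - 1)"
  by (cases k) (simp_all add: ser_deriv_def ser_of_def)

lemma poly_mult_ser_neg:
  "poly_mult_ser p g (- int m - 1) = (\<Sum>i\<le>degree p. coeff p i * g (- int (i + m) - 1))"
proof -
  have "- int m - 1 - int i = - int (i + m) - 1" for i
    by simp
  then show ?thesis
    unfolding poly_mult_ser_def by presburger
qed

lemma Lop_neg:
  "Lop a b f (- int m - 1) =
     (\<Sum>i\<le>degree a. of_nat (i + m) * coeff a i * f (i + m - 1)) +
     (\<Sum>i\<le>degree b. coeff b i * f (i + m))"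
  unfolding Lop_def poly_mult_ser_neg ser_deriv_ser_of_neg ser_of_neg
  by (simp add: sum_negf[symmetric] algebra_simps)

lemma Ladj_add: "Ladj a b (P + Q) = Ladj a b P + Ladj a b Q"
  by (simp add: Ladj_def algebra_simps pderiv_add)

lemma Ladj_smult: "Ladj a b (Polynomial.smult c P) = Polynomial.smult c (Ladj a b P)"
  by (simp add: Ladj_def pderiv_smult smult_add_right)

lemma Ladj_sum: "Ladj a b (\<Sum>x\<in>S. g x) = (\<Sum>x\<in>S. Ladj a b (g x))"
  by (induction S rule: infinite_finite_induct) (auto simp: Ladj_add Ladj_def[of _ _ 0])

lemma pderiv_sum: "pderiv (\<Sum>x\<in>S. g x) = (\<Sum>x\<in>S. pderiv (g x))"
  using higher_pderiv_sum[of 1] by simp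

lemma mult_monom_1:
  "(p :: 'a::comm_semiring_1 poly) * monom 1 m = (\<Sum>i\<le>degree p. monom (coeff p i) (i + m))"
  by (subst (1) poly_as_sum_of_monoms[symmetric]) (simp add: sum_distrib_right mult_monom)

lemma Ladj_monom:
  "Ladj a b (monom 1 m) =
     (\<Sum>i\<le>degree a. monom (of_nat (i + m) * coeff a i) (i + m - 1)) +
     (\<Sum>i\<le>degree b. monom (coeff b i) (i + m))"
  by (simp add: Ladj_def mult_monom_1 pderiv_sum pderiv_monom)

lemma phi_Ladj_monom: "phi f (Ladj a b (monom 1 m)) = Lop a b f (- int m - 1)"
  by (simp add: Ladj_monom Lop_neg phi_add phi_sum phi_monom mult_ac)

lemma phi_Ladj_eq_0:
  assumes "in_poly_ring (Lop a b f)"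
  shows "phi f (Ladj a b P) = 0"
proof -
  have "Ladj a b P = (\<Sum>m\<le>degree P. Polynomial.smult (coeff P m) (Ladj a b (monom 1 m)))"
    by (subst (1) poly_as_sum_of_monoms[symmetric])
      (simp add: Ladj_sum Ladj_smult[symmetric] smult_monom)
  then show ?thesis
    using assms by (simp add: phi_sum phi_smult phi_Ladj_monom in_poly_ring_def)
qed

lemma coeff_Ladj_monom:
  "coeff (Ladj a b (monom 1 m)) (m + s) = of_nat (m + s + 1) * coeff a (s + 1) + coeff b s"
  by (simp add: Ladj_def coeff_pderiv mult.commute[of _ "monom 1 m"] coeff_monom_mult)

lemma degree_Ladj_monom_le:
  assumes "degree a \<le> s + 1" and "degree b \<le> s"
  shows "degree (Ladj a b (monom 1 m)) \<le> m + s"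
proof (rule degree_le, intro allI impI)
  fix k
  assume "m + s < k"
  then have "k = m + (k - m)" and "s < k - m"
    by simp_all
  then show "coeff (Ladj a b (monom 1 m)) k = 0"
    using coeff_Ladj_monom[of a b m "k - m"] assms by (simp add: coeff_eq_0)
qed

lemma coeff_Ladj_monom_top_nonzero:
  fixes a b :: "'a::field_char_0 poly"
  assumes "a \<noteq> 0" and "b \<noteq> 0"
    and "degree a \<le> s + 1" and "degree b \<le> s" and "degree a = s + 1 \<or> degree b = s"
    and "degree a = s + 1 \<Longrightarrow> degree b = s \<Longrightarrow> lead_coeff a * of_nat (m + degree a) + lead_coeff b \<noteq> 0"
  shows "coeff (Ladj a b (monom 1 m)) (m + s) \<noteq> 0"
proof -
  consider "degree a = s + 1" "degree b = s" | "degree a = s + 1" "degree b < s"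
    | "degree a < s + 1" "degree b = s"
    using assms(3-5) by linarith
  then show ?thesis
  proof cases
    case 1
    then show ?thesis
      using assms(6) by (simp add: coeff_Ladj_monom algebra_simps)
  next
    case 2
    then have "coeff a (s + 1) \<noteq> 0"
      using assms(1) by (metis leading_coeff_0_iff)
    with 2 show ?thesis
      by (simp add: coeff_Ladj_monom coeff_eq_0 del: of_nat_Suc)
  next
    case 3
    then have "coeff b s \<noteq> 0"
      using assms(2) by (metis leading_coeff_0_iff)
    with 3 show ?thesis
      by (simp add: coeff_Ladj_monom coeff_eq_0)
  qed
qed

lemma Ladj_division:
  fixes a b :: "'a::field poly"
  assumes "degree a \<le> s + 1" and "degree b \<le> s" and "0 < s"
    and top_nonzero: "\<And>m. coeff (Ladj a b (monom 1 m)) (m + s) \<noteq> 0"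
  shows "\<exists>Q. degree (P - Ladj a b Q) < s"
proof (induction "degree P" arbitrary: P rule: less_induct)
  case less
  show ?case
  proof (cases "degree P < s")
    case True
    then show ?thesis
      by (intro exI[of _ 0]) (simp add: Ladj_def)
  next
    case False
    define n where "n = degree P"
    define m where "m = n - s"
    define T where "T = Ladj a b (monom 1 m)"
    define P' where "P' = P - Polynomial.smult (lead_coeff P / coeff T n) T"
    have n: "n = m + s" "0 < n"
      using False \<open>0 < s\<close> by (simp_all add: m_def n_def)
    have "coeff T n \<noteq> 0"
      unfolding T_def n by (rule top_nonzero)
    then have "coeff P' n = 0"
      by (simp add: P'_def n_def)
    moreover have "degree P' \<le> n"
    proof -
      have "degree T \<le> n"
        unfolding T_def n(1) by (rule degree_Ladj_monom_le[OF assms(1,2)])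
      then show ?thesis
        unfolding P'_def using degree_smult_le
        by (intro degree_diff_le) (auto simp: n_def intro: order_trans)
    qed
    ultimately have "degree P' < n"
      using n(2) by (metis degree_0 le_neq_implies_less leading_coeff_0_iff)
    then obtain Q where "degree (P' - Ladj a b Q) < s"
      using less n_def by blast
    moreover have
      "P' - Ladj a b Q = P - Ladj a b (Q + Polynomial.smult (lead_coeff P / coeff T n) (monom 1 m))"
      by (simp add: P'_def T_def Ladj_add Ladj_smult)
    ultimately show ?thesis
      by metis
  qed
qed

lemma columns_independent_if_rows_independent:
  fixes M :: "nat \<Rightarrow> nat \<Rightarrow> 'a::idom"
  assumes rows: "\<And>c. (\<And>k. k < n \<Longrightarrow> (\<Sum>j<n. c j * M j k) = 0) \<Longrightarrow> \<forall>j<n. c j = 0"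
    and columns: "\<And>j. j < n \<Longrightarrow> (\<Sum>k<n. M j k * r k) = 0"
  shows "\<forall>k<n. r k = 0"
proof -
  define A where "A = mat n n (\<lambda>(j, k). M j k)"
  have A: "A \<in> carrier_mat n n"
    by (simp add: A_def)
  have no_left_kernel: "v = 0\<^sub>v n" if "v \<in> carrier_vec n" "transpose_mat A *\<^sub>v v = 0\<^sub>v n" for v
  proof -
    have "(\<Sum>j<n. v $ j * M j k) = 0" if "k < n" for k
      using that \<open>transpose_mat A *\<^sub>v v = 0\<^sub>v n\<close> \<open>v \<in> carrier_vec n\<close>
      by (auto simp: A_def scalar_prod_def atLeast0LessThan mult.commute dest!: arg_cong[of _ _ "\<lambda>u. u $ k"])
    then show ?thesis
      using rows[of "\<lambda>j. v $ j"] \<open>v \<in> carrier_vec n\<close> by (intro eq_vecI) auto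
  qed
  have "det A \<noteq> 0"
    using no_left_kernel det_0_iff_vec_prod_zero[of "transpose_mat A" n] A det_transpose[OF A]
    by auto
  moreover have "A *\<^sub>v vec n r = 0\<^sub>v n"
    using columns by (intro eq_vecI) (auto simp: A_def scalar_prod_def atLeast0LessThan)
  ultimately have "vec n r = 0\<^sub>v n"
    using det_0_iff_vec_prod_zero[OF A] vec_carrier by blast
  then show ?thesis
    by (metis index_vec index_zero_vec(1))
qed

lemma eq_0_if_phi_vanishes_on_complemented:
  assumes complement: "\<And>P. \<exists>Q\<in>W. degree (P - Q) \<le> w"
    and vanish: "\<And>Q. Q \<in> W \<Longrightarrow> phi g Q = 0"
    and low: "\<And>k. k \<le> w \<Longrightarrow> g k = 0"
  shows "g k = 0"
proof -
  obtain Q where "Q \<in> W" and deg: "degree (monom 1 k - Q) \<le> w"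
    using complement by blast
  have "g k = phi g (monom 1 k - Q) + phi g Q"
    by (simp add: phi_diff phi_monom)
  also have "\<dots> = 0"
    using phi_eq_sum_atMost[OF deg] low vanish[OF \<open>Q \<in> W\<close>] by simp
  finally show ?thesis .
qed

lemma common_kernel_phi_eq:
  fixes W :: "'a::field poly set" and f :: "nat \<Rightarrow> nat \<Rightarrow> 'a"
  assumes complement: "\<And>P. \<exists>Q\<in>W. degree (P - Q) \<le> w"
    and vanish: "\<And>j Q. j \<le> w \<Longrightarrow> Q \<in> W \<Longrightarrow> phi (f j) Q = 0"
    and independent: "\<forall>c. (\<forall>k. (\<Sum>j\<le>w. c j * f j k) = 0) \<longrightarrow> (\<forall>j\<le>w. c j = 0)"
  shows "{P. \<forall>j\<le>w. phi (f j) P = 0} = W"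
proof
  show "W \<subseteq> {P. \<forall>j\<le>w. phi (f j) P = 0}"
    using vanish by blast
  have low_independent: "\<forall>j<Suc w. c j = 0"
    if "\<And>k. k < Suc w \<Longrightarrow> (\<Sum>j<Suc w. c j * f j k) = 0" for c
  proof -
    have "(\<Sum>j\<le>w. c j * f j k) = 0" for k
      by (rule eq_0_if_phi_vanishes_on_complemented[OF complement])
        (use that vanish in \<open>auto simp: phi_lincomb lessThan_Suc_atMost\<close>)
    then show ?thesis
      using independent by (auto simp: less_Suc_eq_le)
  qed
  have low_degree_eq_0: "R = 0" if "degree R \<le> w" and "\<forall>j\<le>w. phi (f j) R = 0" for R
  proof -
    have columns: "(\<Sum>k<Suc w. f j k * coeff R k) = 0" if "j < Suc w" for j
      using phi_eq_sum_atMost[OF \<open>degree R \<le> w\<close>, of "f j"] \<open>\<forall>j\<le>w. phi (f j) R = 0\<close> that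
      by (simp add: lessThan_Suc_atMost mult.commute)
    have "\<forall>k<Suc w. coeff R k = 0"
      using low_independent columns by (rule columns_independent_if_rows_independent[where M = f])
    then have "coeff R k = 0" for k
      using \<open>degree R \<le> w\<close> by (cases "k < Suc w") (simp_all add: coeff_eq_0)
    then show ?thesis
      by (simp add: poly_eq_iff)
  qed
  show "{P. \<forall>j\<le>w. phi (f j) P = 0} \<subseteq> W"
  proof
    fix P
    assume "P \<in> {P. \<forall>j\<le>w. phi (f j) P = 0}"
    moreover obtain Q where "Q \<in> W" and "degree (P - Q) \<le> w"
      using complement by blast
    ultimately have "P - Q = 0"
      using vanish by (intro low_degree_eq_0) (auto simp: phi_diff)
    with \<open>Q \<in> W\<close> show "P \<in> W"
      by simp
  qed
qed

theorem lemma3p4: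
  fixes a b :: "'a::field_char_0 poly"
    and w :: nat
    and f :: "nat \<Rightarrow> nat \<Rightarrow> 'a"
  assumes "a \<noteq> 0" and "b \<noteq> 0"
    and "int w = max (int (degree a) - 2) (int (degree b) - 1)"
    and "int (degree a) - 1 = int (degree b) \<Longrightarrow>
           \<forall>k::nat. lead_coeff a * of_nat (k + degree a) + lead_coeff b \<noteq> 0"
    and "\<forall>c::nat \<Rightarrow> 'a. (\<forall>k. (\<Sum>j\<le>w. c j * f j k) = 0) \<longrightarrow> (\<forall>j\<le>w. c j = 0)"
    and "\<forall>j\<le>w. in_poly_ring (Lop a b (f j))"
  shows "{P. \<forall>j\<le>w. phi (f j) P = 0} = range (Ladj a b)"
proof -
  have deg: "degree a \<le> w + 2" "degree b \<le> w + 1" "degree a = w + 2 \<or> degree b = w + 1"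
    using assms(3) by linarith+
  have "lead_coeff a * of_nat (m + degree a) + lead_coeff b \<noteq> 0"
    if "degree a = w + 2" and "degree b = w + 1" for m
    using assms(4) that by simp
  then have "coeff (Ladj a b (monom 1 m)) (m + (w + 1)) \<noteq> 0" for m
    using assms(1,2) deg by (intro coeff_Ladj_monom_top_nonzero) simp_all
  then have "\<exists>Q. degree (P - Ladj a b Q) < w + 1" for P
    using Ladj_division[of a "w + 1" b] deg by simp
  then have "\<exists>Q\<in>range (Ladj a b). degree (P - Q) \<le> w" for P
    by (metis Suc_eq_plus1 less_Suc_eq_le rangeI)
  moreover have "phi (f j) Q = 0" if "j \<le> w" and "Q \<in> range (Ladj a b)" for j Q
    using phi_Ladj_eq_0 assms(6) that by blast
  ultimately show ?thesis
    using common_kernel_phi_eq[of "range (Ladj a b)" w f] assms(5) by blast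
qed

end
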